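(* Fix $0\le\delta<1/2$. There is a constant $c_\delta>0$ depending only on $\delta$ such that for all integers $m\ge2$ and even $t\ge2$, setting $\sigma:=m^t$ and $\alpha:=2^{\delta t/2}m^{(1-\delta/2)t}$, there exist an integer $g\ge c_\delta\,2^{(1-h(\delta))t}$ and sets $X^{(1)},\dots,X^{(g)},Y^{(1)},\dots,Y^{(g)}\subseteq\{0,1,\dots,\sigma\}$ such that: (1) $|X^{(i)}|=|Y^{(i)}|=\sigma^{1/2}$ for all $1\le i\le g$; (2) $|X^{(i)}+Y^{(i)}|=\sigma$ for all $1\le i\le g$; (3) $|X^{(i)}+Y^{(j)}|\le\alpha$ for all $i\ne j$.
   Context: $h$ is the binary entropy function $h(x)=-x\log_2x-(1-x)\log_2(1-x)$. For sets $P,Q$ of integers, $P+Q=\{p+q:p\in P,q\in Q\}$. *)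

theory Defs
  imports Complex_Main
begin

definition bin_entropy :: "real \<Rightarrow> real" where
  "bin_entropy x = (if x = 0 \<or> x = 1 then 0
     else - x * log 2 x - (1 - x) * log 2 (1 - x))"

definition sumset :: "int set \<Rightarrow> int set \<Rightarrow> int set" where
  "sumset P Q = {p + q | p q. p \<in> P \<and> q \<in> Q}"

end

theory Submission
  imports Defs "HOL-Library.FuncSet" "HOL-Library.Set_Algebras" "HOL.Binomial_Plus"
begin

(*
  Write the numbers below sigma = m^t in base m. For S a subset of {0..<t} let X_S consist of the
  numbers whose digits vanish outside S and Y_S of those whose digits vanish on S. If |S| = t/2
  then |X_S| = |Y_S| = m^(t/2) and X_S + Y_S = {0..<sigma}. For another set T of size t/2, a digit
  of an element of X_S + Y_T is below 2m on S - T, zero on T - S and below m elsewhere, so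
  |X_S + Y_T| <= 2^a * m^(t-a) with a = |S - T|, which is at most alpha as soon as a >= delta t/2.

  It remains to find many (t/2)-subsets of {0..<t} at pairwise distance a >= delta t/2. A maximal
  such family has at least binom(t, t/2) / V members, where V = sum of binom(t/2, k)^2 over
  k < delta t/2 + 1 bounds the number of sets close to a given one. The local estimate
  (binom(n, k) p^k (1-p)^(n-k))^2 <= 8 / (n p (1-p)) for k <= n p gives V = O(2^(h(delta) t) / t),
  and with binom(t, t/2) >= 2^t / t this yields the claimed number of sets.
*)

section \<open>Numbers with prescribed base-$m$ digits\<close>

definition from_digits :: "nat \<Rightarrow> nat \<Rightarrow> (nat \<Rightarrow> nat) \<Rightarrow> nat" where
  "from_digits m t e = (\<Sum>k<t. e k * m ^ k)"

definition digit_set :: "nat \<Rightarrow> nat \<Rightarrow> (nat \<Rightarrow> nat set) \<Rightarrow> nat set" where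
  "digit_set m t D = from_digits m t ` PiE {..<t} D"

lemma from_digits_lt:
  assumes "\<forall>k<t. e k < m"
  shows "from_digits m t e < m ^ t"
  using assms
proof (induction t)
  case 0
  then show ?case by (simp add: from_digits_def)
next
  case (Suc t)
  have "from_digits m (Suc t) e = from_digits m t e + e t * m ^ t"
    by (simp add: from_digits_def)
  also have "\<dots> < m ^ t + (m - 1) * m ^ t"
    using Suc by (intro add_less_le_mono mult_right_mono) auto
  also have "\<dots> = m ^ Suc t"
    using Suc.prems by (cases m) auto
  finally show ?case .
qed

lemma from_digits_digits_eq_mod: "from_digits m t (\<lambda>k. x div m ^ k mod m) = x mod m ^ t"
proof (induction t)
  case 0
  then show ?case by (simp add: from_digits_def)
next
  case (Suc t)
  have "x mod m ^ Suc t = x mod (m ^ t * m)"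
    by (simp add: mult.commute)
  also have "\<dots> = m ^ t * (x div m ^ t mod m) + x mod m ^ t"
    by (rule mod_mult2_eq)
  finally show ?case
    using Suc by (simp add: from_digits_def algebra_simps)
qed

lemma from_digits_cong: "(\<And>k. k < t \<Longrightarrow> e k = e' k) \<Longrightarrow> from_digits m t e = from_digits m t e'"
  by (simp add: from_digits_def)

lemma from_digits_add: "from_digits m t (\<lambda>k. e k + e' k) = from_digits m t e + from_digits m t e'"
  by (simp add: from_digits_def sum.distrib algebra_simps)

lemma image_from_digits_PiE:
  assumes "0 < m"
  shows "from_digits m t ` PiE {..<t} (\<lambda>_. {..<m}) = {..<m ^ t}"
proof (intro equalityI subsetI)
  fix x assume "x \<in> from_digits m t ` PiE {..<t} (\<lambda>_. {..<m})"
  then show "x \<in> {..<m ^ t}" by (auto intro: from_digits_lt)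
next
  fix x :: nat assume "x \<in> {..<m ^ t}"
  then have "x = from_digits m t (restrict (\<lambda>k. x div m ^ k mod m) {..<t})"
    by (simp add: from_digits_digits_eq_mod cong: from_digits_cong)
  moreover have "restrict (\<lambda>k. x div m ^ k mod m) {..<t} \<in> PiE {..<t} (\<lambda>_. {..<m})"
    using assms by auto
  ultimately show "x \<in> from_digits m t ` PiE {..<t} (\<lambda>_. {..<m})" by blast
qed

lemma inj_on_from_digits:
  assumes "0 < m"
  shows "inj_on (from_digits m t) (PiE {..<t} (\<lambda>_. {..<m}))"
  using image_from_digits_PiE[OF assms]
  by (intro eq_card_imp_inj_on) (simp_all add: card_PiE finite_PiE)

lemma card_digit_set:
  assumes "0 < m" and "\<forall>k<t. D k \<subseteq> {..<m}"
  shows "card (digit_set m t D) = (\<Prod>k<t. card (D k))"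
proof -
  have "PiE {..<t} D \<subseteq> PiE {..<t} (\<lambda>_. {..<m})"
    using assms(2) by (intro PiE_mono) auto
  then have "inj_on (from_digits m t) (PiE {..<t} D)"
    using inj_on_from_digits[OF assms(1)] by (rule inj_on_subset[rotated])
  then show ?thesis
    by (simp add: digit_set_def card_image card_PiE)
qed

lemma digit_set_plus_subset:
  "digit_set m t D + digit_set m t E \<subseteq> digit_set m t (\<lambda>k. D k + E k)"
proof
  fix x assume "x \<in> digit_set m t D + digit_set m t E"
  then obtain e e' where e: "e \<in> PiE {..<t} D" and e': "e' \<in> PiE {..<t} E"
    and x: "x = from_digits m t e + from_digits m t e'"
    by (auto simp: digit_set_def elim!: set_plus_elim)
  have "x = from_digits m t (restrict (\<lambda>k. e k + e' k) {..<t})"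
    by (simp add: x from_digits_add[symmetric] cong: from_digits_cong)
  moreover have "restrict (\<lambda>k. e k + e' k) {..<t} \<in> PiE {..<t} (\<lambda>k. D k + E k)"
    using e e' by auto
  ultimately show "x \<in> digit_set m t (\<lambda>k. D k + E k)"
    by (auto simp: digit_set_def)
qed

lemma card_digit_set_plus_le:
  assumes "\<forall>k. finite (D k)" and "\<forall>k. finite (E k)"
  shows "card (digit_set m t D + digit_set m t E) \<le> (\<Prod>k<t. card (D k + E k))"
proof -
  have fin: "finite (PiE {..<t} (\<lambda>k. D k + E k))"
    using assms by (intro finite_PiE) (auto intro: finite_set_plus)
  have "card (digit_set m t D + digit_set m t E) \<le> card (digit_set m t (\<lambda>k. D k + E k))"
    using fin by (intro card_mono digit_set_plus_subset) (simp add: digit_set_def)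
  also have "\<dots> \<le> card (PiE {..<t} (\<lambda>k. D k + E k))"
    unfolding digit_set_def using fin by (rule card_image_le)
  finally show ?thesis by (simp add: card_PiE)
qed

definition supported_numbers :: "nat \<Rightarrow> nat \<Rightarrow> nat set \<Rightarrow> nat set" where
  "supported_numbers m t S = digit_set m t (\<lambda>k. if k \<in> S then {..<m} else {0})"

lemma prod_if_eq_power_card: "finite A \<Longrightarrow> (\<Prod>k\<in>A. if k \<in> S then c else 1) = c ^ card (A \<inter> S)"
  by (simp add: prod.If_cases Int_def)

lemma supported_numbers_subset:
  assumes "0 < m"
  shows "supported_numbers m t S \<subseteq> {..<m ^ t}"
proof -
  have "PiE {..<t} (\<lambda>k. if k \<in> S then {..<m} else {0}) \<subseteq> PiE {..<t} (\<lambda>_. {..<m})"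
    using assms by (intro PiE_mono) auto
  then show ?thesis
    using image_from_digits_PiE[OF assms] unfolding supported_numbers_def digit_set_def
    by (metis image_mono)
qed

lemma card_supported_numbers:
  assumes "0 < m"
  shows "card (supported_numbers m t S) = m ^ card ({..<t} \<inter> S)"
proof -
  have "card (supported_numbers m t S) = (\<Prod>k<t. if k \<in> S then m else 1)"
    unfolding supported_numbers_def using assms
    by (subst card_digit_set) (auto intro!: prod.cong)
  then show ?thesis by (simp add: prod_if_eq_power_card)
qed

lemma card_supported_numbers_balanced:
  assumes "0 < m" and "S \<subseteq> {..<2 * n}" and "card S = n"
  shows "card (supported_numbers m (2 * n) S) = m ^ n"
    and "card (supported_numbers m (2 * n) (- S)) = m ^ n"
proof -
  have "finite S"
    using assms(2) finite_subset by blast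
  then have "card ({..<2 * n} - S) = n"
    using assms by (simp add: card_Diff_subset)
  moreover have "{..<2 * n} \<inter> S = S" "{..<2 * n} \<inter> - S = {..<2 * n} - S"
    using assms by auto
  ultimately show "card (supported_numbers m (2 * n) S) = m ^ n"
    and "card (supported_numbers m (2 * n) (- S)) = m ^ n"
    using assms by (simp_all add: card_supported_numbers)
qed

lemma card_supported_numbers_plus_le:
  "card (supported_numbers m t S + supported_numbers m t T)
     \<le> 2 ^ card ({..<t} \<inter> (S \<inter> T)) * m ^ card ({..<t} \<inter> (S \<union> T))"
proof -
  have full: "card ({..<m} + {..<m}) \<le> 2 * m"
  proof -
    have "{..<m} + {..<m} \<subseteq> {..<2 * m}" by (auto elim!: set_plus_elim)
    then show ?thesis by (metis card_lessThan card_mono finite_lessThan)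
  qed
  have digit: "card ((if k \<in> S then {..<m} else {0}) + (if k \<in> T then {..<m} else {0}))
      \<le> (if k \<in> S \<inter> T then 2 else 1) * (if k \<in> S \<union> T then m else 1)" for k
    by (cases "k \<in> S"; cases "k \<in> T") (simp_all add: full)
  have "card (supported_numbers m t S + supported_numbers m t T)
      \<le> (\<Prod>k<t. card ((if k \<in> S then {..<m} else {0}) + (if k \<in> T then {..<m} else {0})))"
    unfolding supported_numbers_def by (rule card_digit_set_plus_le) simp_all
  also have "\<dots> \<le> (\<Prod>k<t. (if k \<in> S \<inter> T then 2 else 1) * (if k \<in> S \<union> T then m else 1))"
    by (rule prod_mono) (simp only: digit zero_le simp_thms)
  also have "\<dots> = 2 ^ card ({..<t} \<inter> (S \<inter> T)) * m ^ card ({..<t} \<inter> (S \<union> T))"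
    by (simp only: prod.distrib prod_if_eq_power_card finite_lessThan)
  finally show ?thesis .
qed

lemma card_Diff_commute:
  assumes "finite S" "finite T" "card S = card T"
  shows "card (T - S) = card (S - T)"
  using assms by (simp add: card_Diff_subset_Int Int_commute)

lemma card_supported_numbers_plus_complement_le:
  assumes "S \<subseteq> {..<t}" and "T \<subseteq> {..<t}" and "card S = card T"
  shows "card (supported_numbers m t S + supported_numbers m t (- T))
    \<le> 2 ^ card (S - T) * m ^ (t - card (S - T))"
proof -
  have fin: "finite S" "finite T"
    using assms(1,2) finite_subset by blast+
  then have "card (T - S) = card (S - T)"
    using card_Diff_commute assms(3) by blast
  moreover have "{..<t} \<inter> (S \<inter> - T) = S - T" "{..<t} \<inter> (S \<union> - T) = {..<t} - (T - S)"
    using assms by auto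
  moreover have "card ({..<t} - (T - S)) = t - card (T - S)"
    using assms fin by (subst card_Diff_subset) auto
  ultimately show ?thesis
    using card_supported_numbers_plus_le[of m t S "- T"] by simp
qed

lemma supported_numbers_plus_complement:
  assumes "0 < m"
  shows "supported_numbers m t S + supported_numbers m t (- S) = {..<m ^ t}"
proof
  have "(\<lambda>k. (if k \<in> S then {..<m} else {0}) + (if k \<in> - S then {..<m} else {0}))
      = (\<lambda>_. {..<m})"
    by (rule ext) simp
  then have "supported_numbers m t S + supported_numbers m t (- S) \<subseteq> digit_set m t (\<lambda>_. {..<m})"
    using digit_set_plus_subset[of m t "\<lambda>k. if k \<in> S then {..<m} else {0}"
        "\<lambda>k. if k \<in> - S then {..<m} else {0}"]
    unfolding supported_numbers_def by simp
  then show "supported_numbers m t S + supported_numbers m t (- S) \<subseteq> {..<m ^ t}"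
    using image_from_digits_PiE[OF assms] by (simp add: digit_set_def)
next
  show "{..<m ^ t} \<subseteq> supported_numbers m t S + supported_numbers m t (- S)"
  proof
    fix x assume x: "x \<in> {..<m ^ t}"
    define e where "e S' = restrict (\<lambda>k. if k \<in> S' then x div m ^ k mod m else 0) {..<t}" for S'
    have "from_digits m t (\<lambda>k. e S k + e (- S) k) = from_digits m t (\<lambda>k. x div m ^ k mod m)"
      by (rule from_digits_cong) (simp add: e_def)
    then have "x = from_digits m t (e S) + from_digits m t (e (- S))"
      using x by (simp add: from_digits_digits_eq_mod from_digits_add)
    moreover have "e S' \<in> PiE {..<t} (\<lambda>k. if k \<in> S' then {..<m} else {0})" for S'
      using assms by (auto simp: e_def)
    ultimately show "x \<in> supported_numbers m t S + supported_numbers m t (- S)"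
      unfolding supported_numbers_def digit_set_def by blast
  qed
qed

section \<open>A greedy code of balanced sets\<close>

lemma exists_independent_set:
  fixes R :: "'a \<Rightarrow> 'a \<Rightarrow> bool"
  assumes "finite U"
    and refl: "\<And>x. x \<in> U \<Longrightarrow> R x x"
    and sym: "\<And>x y. x \<in> U \<Longrightarrow> y \<in> U \<Longrightarrow> R x y \<Longrightarrow> R y x"
    and degree: "\<And>x. x \<in> U \<Longrightarrow> card {y \<in> U. R x y} \<le> V"
  obtains F where "F \<subseteq> U" and "card U \<le> V * card F"
    and "\<And>x y. x \<in> F \<Longrightarrow> y \<in> F \<Longrightarrow> x \<noteq> y \<Longrightarrow> \<not> R x y"
proof -
  define independent where "independent F \<longleftrightarrow> F \<subseteq> U \<and> (\<forall>x\<in>F. \<forall>y\<in>F. x \<noteq> y \<longrightarrow> \<not> R x y)"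
    for F
  have "Collect independent \<subseteq> Pow U"
    by (auto simp: independent_def)
  then have "finite (Collect independent)"
    using \<open>finite U\<close> by (simp add: finite_subset)
  moreover have "Collect independent \<noteq> {}"
    by (auto simp: independent_def)
  ultimately obtain F where F: "independent F" and maximal: "\<And>G. independent G \<Longrightarrow> F \<subseteq> G \<Longrightarrow> F = G"
    using finite_has_maximal[of "Collect independent"] by auto
  have "U \<subseteq> (\<Union>x\<in>F. {y \<in> U. R x y})"
  proof
    fix y assume y: "y \<in> U"
    show "y \<in> (\<Union>x\<in>F. {y \<in> U. R x y})"
    proof (rule ccontr)
      assume "y \<notin> (\<Union>x\<in>F. {y \<in> U. R x y})"
      then have "\<forall>x\<in>F. \<not> R x y \<and> \<not> R y x"
        using F y sym by (auto simp: independent_def)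
      then have "independent (insert y F)"
        using F y by (auto simp: independent_def)
      moreover have "y \<notin> F"
        using \<open>\<forall>x\<in>F. \<not> R x y \<and> \<not> R y x\<close> refl y by blast
      ultimately show False
        using maximal[of "insert y F"] by blast
    qed
  qed
  then have "card U \<le> card (\<Union>x\<in>F. {y \<in> U. R x y})"
    by (intro card_mono finite_subset[OF _ \<open>finite U\<close>]) auto
  also have "\<dots> \<le> (\<Sum>x\<in>F. card {y \<in> U. R x y})"
    using F \<open>finite U\<close> by (intro card_UN_le) (auto simp: independent_def finite_subset)
  also have "\<dots> \<le> V * card F"
    using sum_bounded_above[of F "\<lambda>x. card {y \<in> U. R x y}" V] F degree
    by (auto simp: independent_def mult.commute)
  finally show ?thesis
    using that F by (auto simp: independent_def)
qed

lemma card_near_subsets_le: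
  assumes "finite W" and "S \<subseteq> W" and "card S = n" and "card W = 2 * n"
  shows "card {T. T \<subseteq> W \<and> card T = n \<and> card (S - T) < d} \<le> (\<Sum>k<d. (n choose k)\<^sup>2)"
proof -
  define pairs where "pairs k = {A. A \<subseteq> S \<and> card A = k} \<times> {B. B \<subseteq> W - S \<and> card B = k}" for k
  have fin: "finite S" "finite (W - S)"
    using assms finite_subset by auto
  have "card (W - S) = n"
    using assms by (simp add: card_Diff_subset fin)
  then have card_pairs: "card (pairs k) = (n choose k)\<^sup>2" for k
    using fin assms by (simp add: pairs_def card_cartesian_product n_subsets power2_eq_square)
  have "{T. T \<subseteq> W \<and> card T = n \<and> card (S - T) < d} \<subseteq> (\<lambda>(A, B). (S - A) \<union> B) ` (\<Union>k<d. pairs k)"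
  proof
    fix T assume "T \<in> {T. T \<subseteq> W \<and> card T = n \<and> card (S - T) < d}"
    then have T: "T \<subseteq> W" "card T = n" "card (S - T) < d" by auto
    have "finite T"
      using T(1) \<open>finite W\<close> by (rule finite_subset)
    then have "card (T - S) = card (S - T)"
      using card_Diff_commute[of S T] T assms fin by simp
    then have "(S - T, T - S) \<in> (\<Union>k<d. pairs k)"
      using T by (intro UN_I[of "card (S - T)"]) (auto simp: pairs_def)
    then show "T \<in> (\<lambda>(A, B). (S - A) \<union> B) ` (\<Union>k<d. pairs k)"
      by (rule image_eqI[rotated]) auto
  qed
  moreover have "finite (\<Union>k<d. pairs k)"
    using fin by (auto simp: pairs_def)
  ultimately have "card {T. T \<subseteq> W \<and> card T = n \<and> card (S - T) < d} \<le> card (\<Union>k<d. pairs k)"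
    by (meson card_image_le card_mono finite_imageI le_trans)
  also have "\<dots> \<le> (\<Sum>k<d. card (pairs k))"
    by (rule card_UN_le) simp
  finally show ?thesis by (simp add: card_pairs)
qed

lemma exists_balanced_code:
  assumes "0 < d"
  obtains F where "F \<subseteq> {T. T \<subseteq> {..<2 * n} \<and> card T = n}"
    and "(2 * n) choose n \<le> (\<Sum>k<d. (n choose k)\<^sup>2) * card F"
    and "\<And>S T. S \<in> F \<Longrightarrow> T \<in> F \<Longrightarrow> S \<noteq> T \<Longrightarrow> d \<le> card (S - T)"
proof -
  define U where "U = {T. T \<subseteq> {..<2 * n} \<and> card T = n}"
  have "U \<subseteq> Pow {..<2 * n}"
    by (auto simp: U_def)
  then have "finite U"
    by (rule finite_subset) simp
  have refl: "card (S - S) < d" for S :: "nat set"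
    using assms by simp
  have sym: "card (T - S) < d" if "S \<in> U" "T \<in> U" "card (S - T) < d" for S T
  proof -
    have "finite S" "finite T"
      using that(1,2) finite_subset[OF _ finite_lessThan] by (auto simp: U_def)
    then show ?thesis
      using that card_Diff_commute[of S T] by (simp add: U_def)
  qed
  have degree: "card {T \<in> U. card (S - T) < d} \<le> (\<Sum>k<d. (n choose k)\<^sup>2)" if "S \<in> U" for S
    using card_near_subsets_le[of "{..<2 * n}" S n d] that by (simp add: U_def conj_assoc)
  obtain F where F: "F \<subseteq> U" "card U \<le> (\<Sum>k<d. (n choose k)\<^sup>2) * card F"
    and independent: "\<And>S T. S \<in> F \<Longrightarrow> T \<in> F \<Longrightarrow> S \<noteq> T \<Longrightarrow> \<not> card (S - T) < d"
    using exists_independent_set[of U "\<lambda>S T. card (S - T) < d", OF \<open>finite U\<close> refl sym degree]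
    by blast
  have "card U = (2 * n) choose n"
    by (simp add: U_def n_subsets)
  then show ?thesis
    using that[of F] F independent by (simp add: U_def not_less)
qed

section \<open>A local bound on the binomial distribution\<close>

definition binomial_prob :: "nat \<Rightarrow> real \<Rightarrow> nat \<Rightarrow> real" where
  "binomial_prob n p j = real (n choose j) * p ^ j * (1 - p) ^ (n - j)"

lemma binomial_prob_nonneg: "0 \<le> p \<Longrightarrow> p \<le> 1 \<Longrightarrow> 0 \<le> binomial_prob n p j"
  by (simp add: binomial_prob_def)

lemma sum_binomial_prob: "(\<Sum>j\<le>n. binomial_prob n p j) = 1"
  using binomial_ring[of p "1 - p" n] by (simp add: binomial_prob_def)

lemma binomial_prob_Suc:
  assumes "j < n"
  shows "binomial_prob n p (Suc j) * ((real j + 1) * (1 - p))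
    = binomial_prob n p j * ((real n - real j) * p)"
proof -
  have "Suc j * (n choose Suc j) = (n - j) * (n choose j)"
    by (simp only: binomial_absorption binomial_absorb_comp)
  then have "real (Suc j * (n choose Suc j)) = real ((n - j) * (n choose j))"
    by (simp only:)
  then have binom: "real (n choose Suc j) * (real j + 1) = real (n choose j) * (real n - real j)"
    using assms by (simp add: of_nat_diff algebra_simps)
  have power: "(1 - p) ^ (n - Suc j) * (1 - p) = (1 - p) ^ (n - j)"
    using assms by (simp add: Suc_diff_Suc[symmetric] del: Suc_diff_Suc)
  have "binomial_prob n p (Suc j) * ((real j + 1) * (1 - p))
      = (real (n choose Suc j) * (real j + 1)) * p ^ Suc j * ((1 - p) ^ (n - Suc j) * (1 - p))"
    by (simp add: binomial_prob_def ac_simps)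
  also have "\<dots> = real (n choose j) * (real n - real j) * p ^ Suc j * (1 - p) ^ (n - j)"
    by (simp only: binom power)
  also have "\<dots> = binomial_prob n p j * ((real n - real j) * p)"
    by (simp add: binomial_prob_def ac_simps)
  finally show ?thesis .
qed

lemma binomial_prob_ratio_ge:
  assumes p: "0 < p" "p \<le> 1/2" and k: "real k \<le> real n * p" and j: "k + i < n"
  defines "A \<equiv> real n * p * (1 - p)"
  shows "binomial_prob n p (Suc (k + i)) \<ge> binomial_prob n p (k + i) * (1 - (real i + 1) / A)"
proof -
  define q where "q = 1 - p"
  have pos: "0 < q" "0 < real n * p"
    using p j by (auto simp: q_def)
  have A_q: "A = real n * p * q" and nonzero: "real n \<noteq> 0" "p \<noteq> 0" "q \<noteq> 0"
    using pos by (auto simp: A_def q_def zero_less_mult_iff)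
  have factor: "(1 - (real i + 1) / A) * ((real (k + i) + 1) * q) \<le> (real n - real (k + i)) * p"
  proof (cases "1 - (real i + 1) / A \<le> 0")
    case True
    then show ?thesis
      using pos j p by (intro order_trans[OF mult_nonpos_nonneg]) auto
  next
    case False
    have "(1 - (real i + 1) / A) * ((real (k + i) + 1) * q)
        \<le> (1 - (real i + 1) / A) * ((real n * p + real i + 1) * q)"
      using False k pos by (intro mult_left_mono mult_right_mono) auto
    also have "\<dots> = (real n * p + real i + 1) * q - (real i + 1) * (real n * p + real i + 1) / (real n * p)"
      using nonzero by (simp add: A_q field_simps)
    also have "\<dots> = A - (real i + 1) * p - (real i + 1)\<^sup>2 / (real n * p)"
      using nonzero by (simp add: A_def q_def field_simps power2_eq_square)
    also have "\<dots> \<le> (real n - real n * p - real i) * p"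
      using pos p by (simp add: A_def algebra_simps)
    also have "\<dots> \<le> (real n - real (k + i)) * p"
      using k p by (intro mult_right_mono) auto
    finally show ?thesis .
  qed
  have "binomial_prob n p (k + i) * (1 - (real i + 1) / A) * ((real (k + i) + 1) * q)
      \<le> binomial_prob n p (k + i) * ((real n - real (k + i)) * p)"
    using factor binomial_prob_nonneg[of p] p by (simp add: mult.assoc mult_left_mono)
  also have "\<dots> = binomial_prob n p (Suc (k + i)) * ((real (k + i) + 1) * q)"
    using binomial_prob_Suc[OF j] by (simp add: q_def)
  finally show ?thesis
    using pos by (simp add: mult_le_cancel_right)
qed

lemma binomial_prob_decay:
  assumes p: "0 < p" "p \<le> 1/2" and k: "real k \<le> real n * p" and "k + i \<le> n"
  defines "A \<equiv> real n * p * (1 - p)"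
  shows "binomial_prob n p (k + i) \<ge> binomial_prob n p k * (1 - (real i)\<^sup>2 / A)"
  using \<open>k + i \<le> n\<close>
proof (induction i)
  case 0
  then show ?case by simp
next
  case (Suc i)
  let ?P = "binomial_prob n p"
  have j: "k + i < n"
    using Suc.prems by simp
  then have "0 < A"
    using p by (simp add: A_def)
  have IH: "?P k * (1 - (real i)\<^sup>2 / A) \<le> ?P (k + i)"
    using Suc by simp
  have ratio: "?P (k + i) * (1 - (real i + 1) / A) \<le> ?P (k + Suc i)"
    using binomial_prob_ratio_ge[OF p k j] by (simp add: A_def)
  have Pk: "0 \<le> ?P k"
    using p by (simp add: binomial_prob_nonneg)
  show ?case
  proof (cases "0 \<le> 1 - (real i + 1) / A")
    case True
    have "(real i)\<^sup>2 / A + (real i + 1) / A \<le> (real (Suc i))\<^sup>2 / A"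
      using \<open>0 < A\<close> by (simp add: field_simps power2_eq_square)
    moreover have "0 \<le> (real i)\<^sup>2 / A * ((real i + 1) / A)"
      using \<open>0 < A\<close> by simp
    moreover have "(1 - (real i)\<^sup>2 / A) * (1 - (real i + 1) / A)
        = 1 - ((real i)\<^sup>2 / A + (real i + 1) / A) + (real i)\<^sup>2 / A * ((real i + 1) / A)"
      by (simp only: left_diff_distrib right_diff_distrib mult_1_left mult_1_right)
    ultimately have "1 - (real (Suc i))\<^sup>2 / A \<le> (1 - (real i)\<^sup>2 / A) * (1 - (real i + 1) / A)"
      by linarith
    then have "?P k * (1 - (real (Suc i))\<^sup>2 / A) \<le> ?P k * (1 - (real i)\<^sup>2 / A) * (1 - (real i + 1) / A)"
      using Pk by (simp add: mult.assoc mult_left_mono)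
    also have "\<dots> \<le> ?P (k + i) * (1 - (real i + 1) / A)"
      using IH True by (rule mult_right_mono)
    finally show ?thesis
      using ratio by simp
  next
    case False
    have "real i + 1 \<le> (real (Suc i))\<^sup>2"
      using mult_right_mono[of 1 "real i + 1" "real i + 1"] by (simp add: power2_eq_square add.commute)
    then have "(real i + 1) / A \<le> (real (Suc i))\<^sup>2 / A"
      using \<open>0 < A\<close> by (simp add: divide_right_mono)
    then have "?P k * (1 - (real (Suc i))\<^sup>2 / A) \<le> 0"
      using False Pk by (simp add: mult_nonneg_nonpos)
    then show ?thesis
      using p binomial_prob_nonneg[of p n "k + Suc i"] by simp
  qed
qed

lemma binomial_prob_le_window:
  assumes p: "0 < p" "p \<le> 1/2" and k: "real k \<le> real n * p" and "k + L \<le> n"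
    and L: "(real L)\<^sup>2 \<le> real n * p * (1 - p) / 2"
  shows "binomial_prob n p k \<le> 2 / (real L + 1)"
proof -
  define A where "A = real n * p * (1 - p)"
  have half: "binomial_prob n p k / 2 \<le> binomial_prob n p (k + i)" if "i \<le> L" for i
  proof -
    have "(real i)\<^sup>2 \<le> (real L)\<^sup>2"
      using that by (simp add: power_mono)
    then have "(real i)\<^sup>2 \<le> A / 2"
      using L unfolding A_def by linarith
    moreover have "0 \<le> A"
      using p by (simp add: A_def)
    ultimately have "(real i)\<^sup>2 / A \<le> 1 / 2"
      by (cases "A = 0") (simp_all add: divide_le_eq)
    then have "binomial_prob n p k * (1 / 2) \<le> binomial_prob n p k * (1 - (real i)\<^sup>2 / A)"
      using binomial_prob_nonneg[of p n k] p by (intro mult_left_mono) auto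
    also have "\<dots> \<le> binomial_prob n p (k + i)"
      using binomial_prob_decay[OF p k, of i] that \<open>k + L \<le> n\<close> by (simp add: A_def)
    finally show ?thesis by simp
  qed
  have "(real L + 1) * (binomial_prob n p k / 2) = (\<Sum>i\<le>L. binomial_prob n p k / 2)"
    by simp
  also have "\<dots> \<le> (\<Sum>i\<le>L. binomial_prob n p (k + i))"
    by (intro sum_mono half) simp
  also have "\<dots> = (\<Sum>j\<in>(+) k ` {..L}. binomial_prob n p j)"
    by (simp add: sum.reindex)
  also have "\<dots> \<le> (\<Sum>j\<le>n. binomial_prob n p j)"
    using \<open>k + L \<le> n\<close> p by (intro sum_mono2) (auto simp: binomial_prob_nonneg)
  finally show ?thesis
    by (simp add: sum_binomial_prob field_simps)
qed

lemma binomial_prob_sq_le: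
  assumes p: "0 < p" "p \<le> 1/2" and "0 < n" and k: "real k \<le> real n * p"
  shows "(binomial_prob n p k)\<^sup>2 \<le> 8 / (real n * p * (1 - p))"
proof -
  define A where "A = real n * p * (1 - p)"
  define L where "L = nat \<lfloor>sqrt (A / 2)\<rfloor>"
  have "0 < A"
    using p \<open>0 < n\<close> by (simp add: A_def)
  have L: "real L \<le> sqrt (A / 2)" "sqrt (A / 2) < real L + 1"
    using \<open>0 < A\<close> by (simp_all add: L_def)
  have L_sq: "(real L)\<^sup>2 \<le> A / 2" "A / 2 < (real L + 1)\<^sup>2"
    using power_mono[OF L(1), of 2] power_strict_mono[OF L(2), of 2] \<open>0 < A\<close> by simp_all
  have "1 * (1 / 2) \<le> real n * (1 - p)"
    using p \<open>0 < n\<close> by (intro mult_mono) auto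
  then have "real n * (1 - p) * (p / 2) \<le> real n * (1 - p) * (real n * (1 - p))"
    using p by (intro mult_left_mono) auto
  then have "A / 2 \<le> (real n * (1 - p))\<^sup>2"
    by (simp add: A_def power2_eq_square ac_simps)
  then have "sqrt (A / 2) \<le> real n * (1 - p)"
    using p by (simp add: real_sqrt_le_iff real_le_lsqrt)
  then have "k + L \<le> n"
    using k L(1) by (simp add: algebra_simps)
  then have "binomial_prob n p k \<le> 2 / (real L + 1)"
    using binomial_prob_le_window[OF p k] L_sq(1) by (simp add: A_def)
  then have "(binomial_prob n p k)\<^sup>2 \<le> (2 / (real L + 1))\<^sup>2"
    using binomial_prob_nonneg[of p n k] p by (simp add: power_mono)
  also have "\<dots> = 4 / (real L + 1)\<^sup>2"
    by (simp add: power_divide)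
  also have "\<dots> \<le> 4 / (A / 2)"
    using L_sq(2) \<open>0 < A\<close> by (intro divide_left_mono) auto
  finally show ?thesis
    by (simp add: A_def)
qed

section \<open>Entropy bounds for the number of close sets\<close>

lemma two_powr_bin_entropy:
  assumes "0 < x" "x < 1"
  shows "2 powr bin_entropy x = x powr (- x) * (1 - x) powr (- (1 - x))"
proof -
  have "bin_entropy x * ln 2 = - x * ln x - (1 - x) * ln (1 - x)"
    using assms by (simp add: bin_entropy_def log_def field_simps)
  then show ?thesis
    using assms by (simp add: powr_def exp_add[symmetric] algebra_simps)
qed

lemma two_powr_bin_entropy_mult:
  assumes "0 < x" "x < 1"
  shows "2 powr (s * bin_entropy x) = ((1 - x) / x) powr (x * s) / (1 - x) powr s"
proof -
  have "2 powr (s * bin_entropy x) = (2 powr bin_entropy x) powr s"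
    by (simp add: powr_powr mult.commute)
  also have "\<dots> = (x powr (- x) * (1 - x) powr (- (1 - x))) powr s"
    using assms by (simp add: two_powr_bin_entropy)
  also have "\<dots> = x powr (- x * s) * (1 - x) powr (x * s - s)"
    using assms by (simp add: powr_mult powr_powr algebra_simps)
  also have "\<dots> = ((1 - x) / x) powr (x * s) / (1 - x) powr s"
    using assms by (simp add: powr_divide powr_diff powr_minus_divide)
  finally show ?thesis .
qed

lemma sum_power_le_powr:
  fixes r x :: real
  assumes "1 < r" and "real d \<le> x + 1"
  shows "(\<Sum>k<d. r ^ k) \<le> r / (r - 1) * r powr x"
proof -
  have "(\<Sum>k<d. r ^ k) = (r ^ d - 1) / (r - 1)"
    using assms sum_gp_strict[of r d] by (simp add: field_simps)
  also have "\<dots> \<le> r ^ d / (r - 1)"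
    using assms by (intro divide_right_mono) auto
  also have "r ^ d = r powr real d"
    using assms by (simp add: powr_realpow)
  also have "\<dots> \<le> r powr (x + 1)"
    using assms by (intro powr_mono) auto
  also have "\<dots> = r * r powr x"
    using assms by (simp add: powr_add)
  finally show ?thesis
    using assms by (simp add: divide_right_mono)
qed

lemma binomial_sq_le:
  assumes p: "0 < p" "p \<le> 1/2" and "0 < n" and k: "real k \<le> real n * p"
  shows "real ((n choose k)\<^sup>2)
    \<le> 8 / (real n * p * (1 - p)) / (1 - p) ^ (2 * n) * (((1 - p) / p)\<^sup>2) ^ k"
proof -
  define w where "w = p ^ k * (1 - p) ^ (n - k)"
  have "0 < w" using p by (simp add: w_def)
  have "real n * p \<le> real n"
    using p by (simp add: mult_left_le)
  with k have "k \<le> n"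
    by linarith
  then have "w * ((1 - p) / p) ^ k = (1 - p) ^ n"
    using p by (simp add: w_def power_divide power_add[symmetric])
  then have "w\<^sup>2 * (((1 - p) / p)\<^sup>2) ^ k = (1 - p) ^ (2 * n)"
    by (metis power_mult power_mult_distrib mult.commute)
  then have "1 / w\<^sup>2 = (((1 - p) / p)\<^sup>2) ^ k / (1 - p) ^ (2 * n)"
    using \<open>0 < w\<close> p by (simp add: field_simps)
  moreover have "binomial_prob n p k = real (n choose k) * w"
    by (simp add: binomial_prob_def w_def)
  then have "real ((n choose k)\<^sup>2) = (binomial_prob n p k)\<^sup>2 * (1 / w\<^sup>2)"
    using \<open>0 < w\<close> by (simp add: power_mult_distrib)
  ultimately have "real ((n choose k)\<^sup>2)
      = (binomial_prob n p k)\<^sup>2 * ((((1 - p) / p)\<^sup>2) ^ k / (1 - p) ^ (2 * n))"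
    by simp
  also have "\<dots> \<le> 8 / (real n * p * (1 - p)) * ((((1 - p) / p)\<^sup>2) ^ k / (1 - p) ^ (2 * n))"
    using binomial_prob_sq_le[OF p \<open>0 < n\<close> k] p by (intro mult_right_mono) auto
  finally show ?thesis
    by simp
qed

lemma sum_sq_binomial_le:
  fixes \<delta> :: real
  assumes "0 < \<delta>" "\<delta> < 1/2"
  obtains K where "0 < K" and "\<And>n d. 0 < n \<Longrightarrow> real d \<le> \<delta> * n + 1 \<Longrightarrow>
    real (\<Sum>k<d. (n choose k)\<^sup>2) \<le> K / n * 2 powr (2 * n * bin_entropy \<delta>)"
proof -
  define q where "q = 1 - \<delta>"
  define \<rho> where "\<rho> = q / \<delta>"
  define K where "K = 8 / (\<delta> * q) * \<rho>\<^sup>2 / (\<rho>\<^sup>2 - 1)"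
  have "0 < q" "1 < \<rho>"
    using assms by (simp_all add: q_def \<rho>_def)
  then have "1 < \<rho>\<^sup>2"
    by (simp add: one_less_power)
  then have "0 < K"
    using assms \<open>0 < q\<close> unfolding K_def by (intro divide_pos_pos mult_pos_pos) auto
  moreover have "real (\<Sum>k<d. (n choose k)\<^sup>2) \<le> K / n * 2 powr (2 * n * bin_entropy \<delta>)"
    if "0 < n" "real d \<le> \<delta> * n + 1" for n d
  proof -
    have summand: "real ((n choose k)\<^sup>2) \<le> 8 / (real n * \<delta> * q) / q ^ (2 * n) * (\<rho>\<^sup>2) ^ k"
      if "k < d" for k
    proof -
      have "real k \<le> real n * \<delta>"
        using \<open>k < d\<close> \<open>real d \<le> \<delta> * n + 1\<close> by (auto simp: algebra_simps)
      then show ?thesis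
        using binomial_sq_le[of \<delta> n k] assms \<open>0 < n\<close> unfolding q_def \<rho>_def by simp
    qed
    have "(\<rho>\<^sup>2) powr (\<delta> * n) = (\<rho> powr 2) powr (\<delta> * n)"
      using \<open>1 < \<rho>\<close> by (simp only: powr_numeral)
    also have "\<dots> = \<rho> powr (2 * \<delta> * n)"
      by (simp only: powr_powr mult.assoc)
    finally have geometric: "(\<Sum>k<d. (\<rho>\<^sup>2) ^ k) \<le> \<rho>\<^sup>2 / (\<rho>\<^sup>2 - 1) * \<rho> powr (2 * \<delta> * n)"
      using sum_power_le_powr[OF \<open>1 < \<rho>\<^sup>2\<close>, of d "\<delta> * n"] that(2) by simp
    have entropy: "\<rho> powr (2 * \<delta> * n) / q ^ (2 * n) = 2 powr (2 * n * bin_entropy \<delta>)"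
      using two_powr_bin_entropy_mult[of \<delta> "real (2 * n)", folded q_def, folded \<rho>_def] assms
      by (simp only: powr_realpow[OF \<open>0 < q\<close>]) (simp add: ac_simps)
    have "real (\<Sum>k<d. (n choose k)\<^sup>2) \<le> (\<Sum>k<d. 8 / (real n * \<delta> * q) / q ^ (2 * n) * (\<rho>\<^sup>2) ^ k)"
      unfolding of_nat_sum by (intro sum_mono summand) simp
    also have "\<dots> = 8 / (real n * \<delta> * q) / q ^ (2 * n) * (\<Sum>k<d. (\<rho>\<^sup>2) ^ k)"
      by (simp add: sum_distrib_left)
    also have "\<dots> \<le> 8 / (real n * \<delta> * q) / q ^ (2 * n) * (\<rho>\<^sup>2 / (\<rho>\<^sup>2 - 1) * \<rho> powr (2 * \<delta> * n))"
      using geometric assms \<open>0 < q\<close> \<open>0 < n\<close> by (intro mult_left_mono) auto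
    also have "\<dots> = K / n * (\<rho> powr (2 * \<delta> * n) / q ^ (2 * n))"
      by (simp add: K_def field_simps)
    finally show ?thesis
      by (simp add: entropy)
  qed
  ultimately show ?thesis
    using that by blast
qed

definition separated_family :: "real \<Rightarrow> nat \<Rightarrow> (nat \<Rightarrow> nat set) \<Rightarrow> nat set \<Rightarrow> bool" where
  "separated_family \<delta> n h I \<longleftrightarrow> (\<forall>i\<in>I. h i \<subseteq> {..<2 * n} \<and> card (h i) = n)
     \<and> (\<forall>i\<in>I. \<forall>j\<in>I. i \<noteq> j \<longrightarrow> \<delta> * n \<le> card (h i - h j))"

lemma separated_family_enumerate:
  fixes \<delta> :: real
  assumes F: "F \<subseteq> {T. T \<subseteq> {..<2 * n} \<and> card T = n}"
    and separated: "\<And>S T. S \<in> F \<Longrightarrow> T \<in> F \<Longrightarrow> S \<noteq> T \<Longrightarrow> \<delta> * n \<le> card (S - T)"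
  obtains h where "separated_family \<delta> n h {1..card F}"
proof -
  have "F \<subseteq> Pow {..<2 * n}"
    using F by auto
  then have "finite F"
    by (rule finite_subset) simp
  then obtain h where h: "bij_betw h {1..card F} F"
    using ex_bij_betw_nat_finite_1 by blast
  have "\<delta> * n \<le> card (h i - h j)" if "i \<in> {1..card F}" "j \<in> {1..card F}" "i \<noteq> j" for i j
  proof -
    have "h i \<noteq> h j"
      using inj_on_eq_iff[OF bij_betw_imp_inj_on[OF h] that(1,2)] that(3) by simp
    then show ?thesis
      using separated bij_betw_apply[OF h that(1)] bij_betw_apply[OF h that(2)] by blast
  qed
  moreover have "h i \<subseteq> {..<2 * n} \<and> card (h i) = n" if "i \<in> {1..card F}" for i
    using F bij_betw_apply[OF h that] by blast
  ultimately show ?thesis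
    using that[of h] by (simp add: separated_family_def)
qed

lemma two_powr_double_eq_four_power: "2 powr real (2 * n) = (4::real) ^ n"
  by (simp only: powr_realpow zero_less_numeral power_mult) simp

lemma exists_large_separated_family:
  fixes \<delta> :: real
  assumes "0 < \<delta>" "\<delta> < 1/2"
  obtains c where "0 < c" and "\<And>n. 0 < n \<Longrightarrow> \<exists>(g::nat) h.
      c * 2 powr ((1 - bin_entropy \<delta>) * real (2 * n)) \<le> g \<and> separated_family \<delta> n h {1..g}"
proof -
  obtain K where "0 < K" and K: "\<And>n d. 0 < n \<Longrightarrow> real d \<le> \<delta> * n + 1 \<Longrightarrow>
      real (\<Sum>k<d. (n choose k)\<^sup>2) \<le> K / n * 2 powr (2 * n * bin_entropy \<delta>)"
    using sum_sq_binomial_le[OF assms] by blast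
  have "\<exists>(g::nat) h. 1 / (2 * K) * 2 powr ((1 - bin_entropy \<delta>) * real (2 * n)) \<le> g
      \<and> separated_family \<delta> n h {1..g}" if "0 < n" for n
  proof -
    define d where "d = nat \<lceil>\<delta> * n\<rceil>"
    have "0 < d" "\<delta> * n \<le> real d" "real d \<le> \<delta> * n + 1"
      using assms \<open>0 < n\<close> by (auto simp: d_def)
    obtain F where F: "F \<subseteq> {T. T \<subseteq> {..<2 * n} \<and> card T = n}"
      and size: "(2 * n) choose n \<le> (\<Sum>k<d. (n choose k)\<^sup>2) * card F"
      and separated: "\<And>S T. S \<in> F \<Longrightarrow> T \<in> F \<Longrightarrow> S \<noteq> T \<Longrightarrow> d \<le> card (S - T)"
      using exists_balanced_code[OF \<open>0 < d\<close>] by blast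
    have "\<delta> * n \<le> card (S - T)" if "S \<in> F" "T \<in> F" "S \<noteq> T" for S T
      using separated[OF that] \<open>\<delta> * n \<le> real d\<close> by linarith
    then obtain h where "separated_family \<delta> n h {1..card F}"
      using separated_family_enumerate[OF F] by blast
    define E where "E = 2 powr (2 * real n * bin_entropy \<delta>)"
    have "0 < E" by (simp add: E_def)
    have "4 ^ n / (2 * real n) \<le> real ((2 * n) choose n)"
      using central_binomial_lower_bound[OF \<open>0 < n\<close>] .
    also have "\<dots> \<le> real (\<Sum>k<d. (n choose k)\<^sup>2) * card F"
      using size by (metis of_nat_le_iff of_nat_mult)
    also have "\<dots> \<le> K / n * E * card F"
      using K[OF \<open>0 < n\<close> \<open>real d \<le> \<delta> * n + 1\<close>] unfolding E_def
      by (rule mult_right_mono) simp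
    finally have "4 ^ n / E / (2 * K) \<le> card F"
      using \<open>0 < n\<close> \<open>0 < K\<close> \<open>0 < E\<close> by (simp add: field_simps)
    moreover have "2 powr ((1 - bin_entropy \<delta>) * real (2 * n)) = 2 powr real (2 * n) / E"
      by (simp add: E_def powr_diff[symmetric] algebra_simps)
    ultimately show ?thesis
      using \<open>separated_family \<delta> n h {1..card F}\<close> two_powr_double_eq_four_power[of n]
      by (intro exI[of _ "card F"] exI[of _ h]) (simp add: mult.commute)
  qed
  then show ?thesis
    using that[of "1 / (2 * K)"] \<open>0 < K\<close> by simp
qed

lemma exists_separated_family:
  fixes \<delta> :: real
  assumes "0 \<le> \<delta>" "\<delta> < 1/2"
  obtains c where "0 < c" and "\<And>n. 0 < n \<Longrightarrow> \<exists>(g::nat) h.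
      c * 2 powr ((1 - bin_entropy \<delta>) * real (2 * n)) \<le> g \<and> separated_family \<delta> n h {1..g}"
proof (cases "\<delta> = 0")
  case True
  (* Separation is vacuous for delta = 0, so one set may be repeated 4^n times; a family of
     distinct sets could not work, as binom(2n, n) = o(4^n). *)
  then have "bin_entropy \<delta> = 0"
    by (simp add: bin_entropy_def)
  then have "\<exists>(g::nat) h. 1 * 2 powr ((1 - bin_entropy \<delta>) * real (2 * n)) \<le> g
      \<and> separated_family \<delta> n h {1..g}" for n
    using True two_powr_double_eq_four_power[of n]
    by (intro exI[of _ "4 ^ n"] exI[of _ "\<lambda>_. {..<n}"]) (simp add: separated_family_def)
  then show ?thesis
    by (intro that[of 1]) simp_all
next
  case False
  with assms have "0 < \<delta>"
    by simp
  then show ?thesis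
    by (rule exists_large_separated_family[OF _ \<open>\<delta> < 1/2\<close> that])
qed

section \<open>The sumset construction\<close>

lemma sumset_image_int: "sumset (int ` A) (int ` B) = int ` (A + B)"
  by (force simp: sumset_def set_plus_def)

lemma card_sumset_image_int: "card (sumset (int ` A) (int ` B)) = card (A + B)"
  unfolding sumset_image_int by (rule card_image) (simp add: inj_on_def)

lemma pow_two_mult_pow_le_powr:
  fixes \<delta> :: real
  assumes "2 \<le> m" and "a \<le> t" and "\<delta> * t / 2 \<le> a"
  shows "real (2 ^ a * m ^ (t - a)) \<le> 2 powr (\<delta> * t / 2) * real m powr ((1 - \<delta> / 2) * t)"
proof -
  have "0 < real m" using assms by simp
  have "real (2 ^ a * m ^ (t - a)) = real m ^ t * (2 / real m) ^ a"
    using \<open>a \<le> t\<close> \<open>0 < real m\<close>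
    by (simp add: power_divide power_add[symmetric] field_simps flip: le_add_diff_inverse)
  also have "\<dots> = real m powr t * (2 / real m) powr a"
    using \<open>0 < real m\<close> by (simp add: powr_realpow)
  also have "\<dots> \<le> real m powr t * (2 / real m) powr (\<delta> * t / 2)"
    using assms by (intro mult_left_mono powr_mono') auto
  also have "\<dots> = 2 powr (\<delta> * t / 2) * real m powr (t - \<delta> * t / 2)"
    using \<open>0 < real m\<close> by (simp add: powr_divide powr_diff ac_simps)
  also have "t - \<delta> * t / 2 = (1 - \<delta> / 2) * t"
    by (simp add: algebra_simps)
  finally show ?thesis .
qed

lemma sumset_construction:
  fixes \<delta> :: real and h :: "nat \<Rightarrow> nat set"
  assumes "2 \<le> m" and "separated_family \<delta> n h I"
  defines "t \<equiv> 2 * n"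
  defines "X \<equiv> \<lambda>i. int ` supported_numbers m t (h i)"
    and "Y \<equiv> \<lambda>i. int ` supported_numbers m t (- h i)"
  shows "(\<forall>i\<in>I. X i \<subseteq> {0..int m ^ t} \<and> Y i \<subseteq> {0..int m ^ t})
    \<and> (\<forall>i\<in>I. real (card (X i)) = sqrt (real_of_int (int m ^ t))
                \<and> real (card (Y i)) = sqrt (real_of_int (int m ^ t)))
    \<and> (\<forall>i\<in>I. int (card (sumset (X i) (Y i))) = int m ^ t)
    \<and> (\<forall>i\<in>I. \<forall>j\<in>I. i \<noteq> j \<longrightarrow>
         real (card (sumset (X i) (Y j))) \<le> 2 powr (\<delta> * t / 2) * real m powr ((1 - \<delta> / 2) * t))"
proof -
  have h: "\<forall>i\<in>I. h i \<subseteq> {..<t} \<and> card (h i) = n"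
    and separated: "\<forall>i\<in>I. \<forall>j\<in>I. i \<noteq> j \<longrightarrow> \<delta> * n \<le> card (h i - h j)"
    using \<open>separated_family \<delta> n h I\<close> by (simp_all add: separated_family_def t_def)
  have "0 < m" using \<open>2 \<le> m\<close> by simp
  have "int ` supported_numbers m t S \<subseteq> {0..int m ^ t}" for S
    using supported_numbers_subset[OF \<open>0 < m\<close>, of t S] by (force simp flip: of_nat_power)
  then have bounded: "X i \<subseteq> {0..int m ^ t} \<and> Y i \<subseteq> {0..int m ^ t}" for i
    by (simp add: X_def Y_def)
  have "real_of_int (int m ^ t) = (real m ^ n)\<^sup>2"
    using t_def by (simp add: power_mult[symmetric] mult.commute)
  then have "sqrt (real_of_int (int m ^ t)) = real m ^ n"
    by simp
  moreover have "card (X i) = m ^ n" "card (Y i) = m ^ n" if "i \<in> I" for i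
    using card_supported_numbers_balanced[OF \<open>0 < m\<close>] h that
    by (simp_all add: X_def Y_def t_def card_image)
  ultimately have sizes: "real (card (X i)) = sqrt (real_of_int (int m ^ t))
      \<and> real (card (Y i)) = sqrt (real_of_int (int m ^ t))" if "i \<in> I" for i
    using that by simp
  have diagonal: "int (card (sumset (X i) (Y i))) = int m ^ t" for i
    using \<open>0 < m\<close> by (simp add: X_def Y_def card_sumset_image_int supported_numbers_plus_complement)
  have cross: "real (card (sumset (X i) (Y j))) \<le> 2 powr (\<delta> * t / 2) * real m powr ((1 - \<delta> / 2) * t)"
    if "i \<in> I" "j \<in> I" "i \<noteq> j" for i j
  proof -
    define a where "a = card (h i - h j)"
    have sub: "h i \<subseteq> {..<t}" "h j \<subseteq> {..<t}" and "card (h i) = card (h j)"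
      using h that by auto
    have "a \<le> card (h i)"
      unfolding a_def using finite_subset[OF sub(1)] by (intro card_mono) auto
    also have "\<dots> \<le> t"
      using card_mono[OF finite_lessThan sub(1)] by simp
    finally have "a \<le> t" .
    moreover have "\<delta> * t / 2 \<le> a"
      using separated that by (simp add: a_def t_def)
    moreover have "card (sumset (X i) (Y j)) \<le> 2 ^ a * m ^ (t - a)"
      using card_supported_numbers_plus_complement_le[OF sub \<open>card (h i) = card (h j)\<close>]
      by (simp add: X_def Y_def card_sumset_image_int a_def)
    ultimately show ?thesis
      using pow_two_mult_pow_le_powr[OF \<open>2 \<le> m\<close>] of_nat_mono order_trans by blast
  qed
  show ?thesis
    using bounded sizes diagonal cross by blast
qed

theorem mainTheorem3:
  fixes \<delta> :: real
  assumes "0 \<le> \<delta>" and "\<delta> < 1/2"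
  shows "\<exists>c > 0. \<forall>(m::nat) (t::nat). m \<ge> 2 \<longrightarrow> t \<ge> 2 \<longrightarrow> even t \<longrightarrow>
    (let \<sigma> = (int m) ^ t;
         \<alpha> = 2 powr (\<delta> * real t / 2) * real m powr ((1 - \<delta> / 2) * real t)
     in \<exists>(g::nat) (X :: nat \<Rightarrow> int set) (Y :: nat \<Rightarrow> int set).
          real g \<ge> c * 2 powr ((1 - bin_entropy \<delta>) * real t) \<and>
          (\<forall>i\<in>{1..g}. X i \<subseteq> {0..\<sigma>} \<and> Y i \<subseteq> {0..\<sigma>}) \<and>
          (\<forall>i\<in>{1..g}. real (card (X i)) = sqrt (real_of_int \<sigma>) \<and>
                         real (card (Y i)) = sqrt (real_of_int \<sigma>)) \<and>
          (\<forall>i\<in>{1..g}. int (card (sumset (X i) (Y i))) = \<sigma>) \<and>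
          (\<forall>i\<in>{1..g}. \<forall>j\<in>{1..g}. i \<noteq> j \<longrightarrow>
              real (card (sumset (X i) (Y j))) \<le> \<alpha>))"
proof -
  obtain c where "0 < c" and family: "\<And>n. 0 < n \<Longrightarrow> \<exists>(g::nat) h.
      c * 2 powr ((1 - bin_entropy \<delta>) * real (2 * n)) \<le> g \<and> separated_family \<delta> n h {1..g}"
    using exists_separated_family[OF assms] by blast
  have "\<exists>(g::nat) (X :: nat \<Rightarrow> int set) (Y :: nat \<Rightarrow> int set).
          real g \<ge> c * 2 powr ((1 - bin_entropy \<delta>) * real t) \<and>
          (\<forall>i\<in>{1..g}. X i \<subseteq> {0..int m ^ t} \<and> Y i \<subseteq> {0..int m ^ t}) \<and>
          (\<forall>i\<in>{1..g}. real (card (X i)) = sqrt (real_of_int (int m ^ t)) \<and>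
                         real (card (Y i)) = sqrt (real_of_int (int m ^ t))) \<and>
          (\<forall>i\<in>{1..g}. int (card (sumset (X i) (Y i))) = int m ^ t) \<and>
          (\<forall>i\<in>{1..g}. \<forall>j\<in>{1..g}. i \<noteq> j \<longrightarrow>
              real (card (sumset (X i) (Y j))) \<le> 2 powr (\<delta> * real t / 2) * real m powr ((1 - \<delta> / 2) * real t))"
    if "2 \<le> m" "2 \<le> t" "even t" for m t :: nat
  proof -
    obtain n where t: "t = 2 * n" and "0 < n"
      using \<open>2 \<le> t\<close> \<open>even t\<close> by (auto elim!: evenE)
    obtain g h where size: "c * 2 powr ((1 - bin_entropy \<delta>) * real (2 * n)) \<le> g"
      and "separated_family \<delta> n h {1..g}"
      using family[OF \<open>0 < n\<close>] by blast
    note construction = sumset_construction[OF \<open>2 \<le> m\<close> this(2)]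
    show ?thesis
      unfolding t using conjI[OF size construction]
      by (intro exI[of _ g] exI[of _ "\<lambda>i. int ` supported_numbers m (2 * n) (h i)"]
          exI[of _ "\<lambda>i. int ` supported_numbers m (2 * n) (- h i)"])
  qed
  then show ?thesis
    unfolding Let_def using \<open>0 < c\<close> by (intro exI[of _ c] conjI allI impI) simp_all
qed

end
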